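(* Let $(K_d)_{d\in\mathbb N}$ be a sequence of symmetric, isotropic convex bodies $K_d\subseteq\mathbb R^d$ that satisfy a uniform $\psi_2$-estimate, and assume \[ \limsup_{d\to\infty}\, \frac{\mathrm{rad}(K_d)}{\sqrt{d}\,L_{K_d}} \,<\, 2. \] Let $(A_d)_{d\in\mathbb N}$, $(B_d)_{d\in\mathbb N}$ be positive numbers. Then the curse of dimensionality holds for the classes $\mathscr C^1_d(A_d,B_d,K_d)$ if \[ \limsup_{d\to\infty}\; \min\left\{ A_{d} \, \sqrt{d} \,L_{K_d},\; B_{d} \, d \,L_{K_d}^2\right\} \,>\, 0. \]
   Context: A convex body $K\subseteq\mathbb R^d$ is a compact convex set with non-empty interior; it is symmetric if $-x\in K$ whenever $x\in K$, and then $\mathrm{rad}(K)=\sup_{y\in K}\|y\|_2$. $K$ is isotropic if $\mathrm{vol}_d(K)=1$, $\int_K x\,dx=0$, and there is $L_K\in(0,\infty)$ (the isotropic constant) with $\int_K\langle x,\theta\rangle^2\,dx=L_K^2$ for all $\theta\in\mathbb S^{d-1}$. For $\alpha\in[1,2]$ and a probability measure $\mu$, $\|f\|_{\psi_\alpha(\mu)}=\inf\{\lambda>0:\int e^{|f/\lambda|^\alpha}d\mu\le 2\}$. The sequence $(K_d)$ satisfies a uniform $\psi_\alpha$-estimate if there is a constant $b_\alpha\in(0,\infty)$ independent of $d$ such that for all $d$ and all $\theta\in\mathbb S^{d-1}$, $\|\langle\cdot,\theta\rangle\|_{\psi_\alpha(\mu_d)}\le b_\alpha(\int_{K_d}\langle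 x,\theta\rangle^2dx)^{1/2}$, where $\mu_d$ is the uniform (Lebesgue) probability measure on $K_d$. For $g$ defined on $K_d$, $\mathrm{Lip}(g)=\sup_{x\ne y\in K_d}|g(x)-g(y)|/\|x-y\|_2$, and $D^\theta$ denotes the directional derivative in direction $\theta$. For $A,B>0$, $\mathscr C^1_d(A,B,K_d)=\{f\in\mathscr C^1(K_d): \|f\|_\infty\le1,\ \mathrm{Lip}(f)\le A,\ \mathrm{Lip}(D^\theta f)\le B \text{ for all }\theta\in\mathbb S^{d-1}\}$. Integration problem: approximate $S_d(f)=\int_{K_d}f(x)\,dx$ for $f\in\mathscr F_d$ by algorithms $A_{n,d}(f)=\phi_{n,d}(f(x_1),\dots,f(x_n))$, where $\phi_{n,d}:\mathbb R^n\to\mathbb R$ is arbitrary and the points $x_j\in K_d$ may be chosen adaptively (depending on $f(x_1),\dots,f(x_{j-1})$). The worst-case error is $e(A_{n,d})=\sup_{f\in\mathscr F_d}|S_d(f)-A_{n,d}(f)|$, and the information complexity $n(\varepsilon,\mathscr F_d)$ is the minimal $n$ for which some such algorithm has $e(A_{n,d})\le\varepsilon$. The curse of dimensionality holds for $(\mathscr F_d)$ if there are $c,\varepsilon_0,\gamma>0$ with $n(\varepsilon,\mathscr F_d)\ge c(1+\gamma)^d$ for all $\varepsilon\le\varepsilon_0$ and infinitely many $d\in\mathbb N$. *)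

theory Defs
  imports "HOL-Analysis.Analysis"
begin

text \<open>Points of R^d are represented as extensional functions nat => real on {..<d}.\<close>

definition dvec :: "nat \<Rightarrow> (nat \<Rightarrow> real) set" where
  "dvec d = PiE {..<d} (\<lambda>_. UNIV)"

definition ip :: "nat \<Rightarrow> (nat \<Rightarrow> real) \<Rightarrow> (nat \<Rightarrow> real) \<Rightarrow> real" where
  "ip d x y = (\<Sum>i<d. x i * y i)"

definition nrm :: "nat \<Rightarrow> (nat \<Rightarrow> real) \<Rightarrow> real" where
  "nrm d x = sqrt (ip d x x)"

definition dst :: "nat \<Rightarrow> (nat \<Rightarrow> real) \<Rightarrow> (nat \<Rightarrow> real) \<Rightarrow> real" where
  "dst d x y = nrm d (\<lambda>i. x i - y i)"

definition sphere_d :: "nat \<Rightarrow> (nat \<Rightarrow> real) set" where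
  "sphere_d d = {\<theta> \<in> dvec d. nrm d \<theta> = 1}"

definition leb :: "nat \<Rightarrow> (nat \<Rightarrow> real) measure" where
  "leb d = PiM {..<d} (\<lambda>_. lborel)"

definition integ :: "nat \<Rightarrow> (nat \<Rightarrow> real) set \<Rightarrow> ((nat \<Rightarrow> real) \<Rightarrow> real) \<Rightarrow> real" where
  "integ d K f = set_lebesgue_integral (leb d) K f"

definition is_interior_pt :: "nat \<Rightarrow> (nat \<Rightarrow> real) set \<Rightarrow> (nat \<Rightarrow> real) \<Rightarrow> bool" where
  "is_interior_pt d K x \<longleftrightarrow> (\<exists>r>0. {y \<in> dvec d. dst d x y < r} \<subseteq> K)"

definition convex_body :: "nat \<Rightarrow> (nat \<Rightarrow> real) set \<Rightarrow> bool" where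
  "convex_body d K \<longleftrightarrow> K \<subseteq> dvec d \<and> compact K
     \<and> (\<forall>x\<in>K. \<forall>y\<in>K. \<forall>t\<in>{0..1}. restrict (\<lambda>i. (1 - t) * x i + t * y i) {..<d} \<in> K)
     \<and> (\<exists>x\<in>K. is_interior_pt d K x)"

definition symmetric_body :: "nat \<Rightarrow> (nat \<Rightarrow> real) set \<Rightarrow> bool" where
  "symmetric_body d K \<longleftrightarrow> (\<forall>x\<in>K. restrict (\<lambda>i. - x i) {..<d} \<in> K)"

definition rad :: "nat \<Rightarrow> (nat \<Rightarrow> real) set \<Rightarrow> real" where
  "rad d K = (SUP y\<in>K. nrm d y)"

definition isotropic :: "nat \<Rightarrow> (nat \<Rightarrow> real) set \<Rightarrow> bool" where
  "isotropic d K \<longleftrightarrow> emeasure (leb d) K = 1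
     \<and> (\<forall>i<d. integ d K (\<lambda>x. x i) = 0)
     \<and> (\<exists>L>0. \<forall>\<theta>\<in>sphere_d d. integ d K (\<lambda>x. (ip d x \<theta>)\<^sup>2) = L\<^sup>2)"

definition iso_const :: "nat \<Rightarrow> (nat \<Rightarrow> real) set \<Rightarrow> real" where
  "iso_const d K = (THE L. L > 0 \<and> (\<forall>\<theta>\<in>sphere_d d. integ d K (\<lambda>x. (ip d x \<theta>)\<^sup>2) = L\<^sup>2))"

text \<open>Orlicz psi_alpha norm (infimum of the empty set is +infinity).\<close>
definition psi_norm :: "real \<Rightarrow> 'a measure \<Rightarrow> ('a \<Rightarrow> real) \<Rightarrow> ereal" where
  "psi_norm \<alpha> \<mu> f = Inf {ereal s | s. s > 0 \<and>
      (\<integral>\<^sup>+ x. ennreal (exp (\<bar>f x / s\<bar> powr \<alpha>)) \<partial>\<mu>) \<le> 2}"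

definition uniform_psi_estimate :: "real \<Rightarrow> (nat \<Rightarrow> (nat \<Rightarrow> real) set) \<Rightarrow> bool" where
  "uniform_psi_estimate \<alpha> Ks \<longleftrightarrow> (\<exists>b>0. \<forall>d. \<forall>\<theta>\<in>sphere_d d.
      psi_norm \<alpha> (uniform_measure (leb d) (Ks d)) (\<lambda>x. ip d x \<theta>)
        \<le> ereal (b * sqrt (integ d (Ks d) (\<lambda>x. (ip d x \<theta>)\<^sup>2))))"

definition is_C1 :: "nat \<Rightarrow> (nat \<Rightarrow> real) set \<Rightarrow> ((nat \<Rightarrow> real) \<Rightarrow> real)
    \<Rightarrow> ((nat \<Rightarrow> real) \<Rightarrow> nat \<Rightarrow> real) \<Rightarrow> bool" where
  "is_C1 d K f g \<longleftrightarrow> continuous_on K f \<and> (\<forall>i<d. continuous_on K (\<lambda>x. g x i))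
     \<and> (\<forall>x\<in>K. is_interior_pt d K x \<longrightarrow>
          (\<forall>i<d. ((\<lambda>t. f (x(i := x i + t))) has_real_derivative g x i) (at 0)))"

definition dir_deriv :: "nat \<Rightarrow> ((nat \<Rightarrow> real) \<Rightarrow> nat \<Rightarrow> real) \<Rightarrow> (nat \<Rightarrow> real)
    \<Rightarrow> (nat \<Rightarrow> real) \<Rightarrow> real" where
  "dir_deriv d g \<theta> x = (\<Sum>i<d. \<theta> i * g x i)"

definition C1_class :: "nat \<Rightarrow> real \<Rightarrow> real \<Rightarrow> (nat \<Rightarrow> real) set
    \<Rightarrow> ((nat \<Rightarrow> real) \<Rightarrow> real) set" where
  "C1_class d A B K = {f. \<exists>g. is_C1 d K f g
     \<and> (\<forall>x\<in>K. \<bar>f x\<bar> \<le> 1)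
     \<and> (\<forall>x\<in>K. \<forall>y\<in>K. \<bar>f x - f y\<bar> \<le> A * dst d x y)
     \<and> (\<forall>\<theta>\<in>sphere_d d. \<forall>x\<in>K. \<forall>y\<in>K.
          \<bar>dir_deriv d g \<theta> x - dir_deriv d g \<theta> y\<bar> \<le> B * dst d x y)}"

text \<open>Adaptive information: the j-th point P j ys depends on the previous values ys.\<close>
fun adapt_info :: "(nat \<Rightarrow> real list \<Rightarrow> 'a) \<Rightarrow> ('a \<Rightarrow> real) \<Rightarrow> nat \<Rightarrow> real list" where
  "adapt_info P f 0 = []"
| "adapt_info P f (Suc j) = (let ys = adapt_info P f j in ys @ [f (P j ys)])"

definition info_complexity :: "nat \<Rightarrow> (nat \<Rightarrow> real) set \<Rightarrow> ((nat \<Rightarrow> real) \<Rightarrow> real) set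
    \<Rightarrow> real \<Rightarrow> ereal" where
  "info_complexity d K F \<epsilon> = Inf {ereal (real n) | n. \<exists>P \<phi>.
      (\<forall>j ys. P j ys \<in> K) \<and>
      (SUP f\<in>F. ereal \<bar>integ d K f - \<phi> (adapt_info P f n)\<bar>) \<le> ereal \<epsilon>}"

definition curse :: "(nat \<Rightarrow> ((nat \<Rightarrow> real) \<Rightarrow> real) set) \<Rightarrow> (nat \<Rightarrow> (nat \<Rightarrow> real) set) \<Rightarrow> bool" where
  "curse F Ks \<longleftrightarrow> (\<exists>c>0. \<exists>\<epsilon>0>0. \<exists>\<gamma>>0. \<exists>\<^sub>\<infinity> d. \<forall>\<epsilon>. \<epsilon> \<le> \<epsilon>0 \<longrightarrow>
      info_complexity d (Ks d) (F d) \<epsilon> \<ge> ereal (c * (1 + \<gamma>) ^ d))"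

end

theory Submission
  imports Defs
begin

text \<open>Let \<open>q\<^sub>1, \<dots>, q\<^sub>n\<close> be the points an algorithm queries when all answers are zero, and let
  \<open>f\<close> be \<open>c\<close> times the squared distance to the convex hull of \<open>0, q\<^sub>1, \<dots>, q\<^sub>n\<close>. Then \<open>f\<close>
  and \<open>-f\<close> give the same information, so the error is at least the integral of \<open>f\<close>. Squared
  distances to convex sets have 2-Lipschitz gradients, and \<open>K\<close> lies in the ball of radius
  \<open>2 \<surd>d L\<close>, so with \<open>c \<sim> min(A/(\<surd>d L), B/(d L\<^sup>2))\<close> the function \<open>f\<close> is in the class.
  A point \<open>x\<close> with \<open>|x|\<^sup>2 \<ge> d L\<^sup>2/4\<close> and \<open>\<langle>x, q\<^sub>j\<rangle> \<le> d L\<^sup>2/8\<close> for all \<open>j\<close> has distance at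
  least \<open>|x|/2\<close> from the hull. By the reverse Markov inequality the first condition holds on a
  set of volume at least \<open>3/16\<close>, while by the \<open>\<psi>\<^sub>2\<close>-estimate each cap \<open>\<langle>x, q\<^sub>j\<rangle> > d L\<^sup>2/8\<close>
  has volume at most \<open>2 exp(-d/(1024 b\<^sup>2))\<close>. Hence the integral of \<open>f\<close> stays bounded below
  unless \<open>n \<ge> (3/64) exp(d/(1024 b\<^sup>2))\<close>.\<close>

section \<open>Squared distance on the first \<open>d\<close> coordinates\<close>

definition sqdist :: "nat \<Rightarrow> (nat \<Rightarrow> real) \<Rightarrow> (nat \<Rightarrow> real) \<Rightarrow> real" where
  "sqdist d x y = (\<Sum>k<d. (x k - y k)\<^sup>2)"

lemma sqdist_nonneg: "0 \<le> sqdist d x y"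
  unfolding sqdist_def by (intro sum_nonneg) auto

lemma sqdist_commute: "sqdist d x y = sqdist d y x"
  unfolding sqdist_def by (simp add: power2_commute)

lemma dst_eq_sqrt_sqdist: "dst d x y = sqrt (sqdist d x y)"
  by (simp add: dst_def nrm_def ip_def sqdist_def power2_eq_square)

lemma sqdist_update:
  fixes x :: "nat \<Rightarrow> real"
  assumes "i < d" shows "sqdist d (x(i := s)) x = (s - x i)\<^sup>2"
proof -
  have "sqdist d (x(i := s)) x = (\<Sum>k<d. if k = i then (s - x i)\<^sup>2 else 0)"
    unfolding sqdist_def by (intro sum.cong) auto
  thus ?thesis using assms by simp
qed

lemma sum_update_diff_mult:
  fixes x :: "nat \<Rightarrow> real"
  assumes "i < d" shows "(\<Sum>k<d. ((x(i := s)) k - x k) * h k) = (s - x i) * h i"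
proof -
  have "(\<Sum>k<d. ((x(i := s)) k - x k) * h k) = (\<Sum>k<d. if k = i then (s - x i) * h i else 0)"
    by (intro sum.cong) auto
  thus ?thesis using assms by simp
qed

lemma sum_square_add:
  fixes u v :: "nat \<Rightarrow> real"
  shows "(\<Sum>k\<in>A. (u k + v k)\<^sup>2) = (\<Sum>k\<in>A. (u k)\<^sup>2) + 2 * (\<Sum>k\<in>A. u k * v k) + (\<Sum>k\<in>A. (v k)\<^sup>2)"
  by (simp add: power2_sum sum.distrib sum_distrib_left mult.assoc)

lemma abs_sum_mult_le_sqrt:
  "\<bar>\<Sum>k\<in>A. u k * v k\<bar> \<le> sqrt (\<Sum>k\<in>A. (u k)\<^sup>2) * sqrt (\<Sum>k\<in>A. (v k)\<^sup>2)"
proof -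
  have "\<bar>\<Sum>k\<in>A. u k * v k\<bar> \<le> (\<Sum>k\<in>A. \<bar>u k\<bar> * \<bar>v k\<bar>)"
    by (rule order_trans[OF sum_abs]) (simp add: abs_mult)
  also have "\<dots> \<le> L2_set u A * L2_set v A"
    by (rule L2_set_mult_ineq)
  finally show ?thesis by (simp add: L2_set_def)
qed

lemma isCont_sqdist: "isCont (\<lambda>y'. sqdist d y' y) x"
proof -
  have "isCont (\<lambda>y::nat \<Rightarrow> real. y k) x" for k
    using continuous_on_eq_continuous_at[OF open_UNIV, of "\<lambda>y::nat \<Rightarrow> real. y k"] by simp
  thus ?thesis unfolding sqdist_def by (intro continuous_intros)
qed

lemma continuous_on_if_sqdist_Lipschitz:
  assumes "\<And>y y'. \<bar>F y' - F y\<bar> \<le> M * sqrt (sqdist d y' y)"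
  shows "continuous_on S F"
proof -
  have "isCont F y" for y
  proof -
    have "((\<lambda>y'. M * sqrt (sqdist d y' y)) \<longlongrightarrow> M * sqrt (sqdist d y y)) (at y)"
      by (intro tendsto_intros isCont_tendsto_compose[OF isCont_sqdist] tendsto_ident_at)
    hence "((\<lambda>y'. M * sqrt (sqdist d y' y)) \<longlongrightarrow> 0) (at y)"
      by (simp add: sqdist_def)
    hence "((\<lambda>y'. F y' - F y) \<longlongrightarrow> 0) (at y)"
      by (rule Lim_null_comparison[rotated]) (use assms in auto)
    thus ?thesis unfolding isCont_def by (simp add: LIM_zero_iff)
  qed
  thus ?thesis by (simp add: continuous_at_imp_continuous_on)
qed

lemma has_real_derivative_if_quadratic_remainder:
  fixes F :: "real \<Rightarrow> real"
  assumes "\<And>t. \<bar>F t - F 0 - a * t\<bar> \<le> M * t\<^sup>2"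
  shows "(F has_real_derivative a) (at 0)"
proof -
  have "norm ((F t - F 0) / t - a) \<le> \<bar>M\<bar> * \<bar>t\<bar>" if "t \<noteq> 0" for t
  proof -
    have "norm ((F t - F 0) / t - a) = \<bar>F t - F 0 - a * t\<bar> / \<bar>t\<bar>"
      using that by (simp add: field_simps)
    also have "\<dots> \<le> M * \<bar>t\<bar> * \<bar>t\<bar> / \<bar>t\<bar>"
      using assms[of t] by (intro divide_right_mono) (auto simp: power2_eq_square abs_mult)
    also have "\<dots> \<le> \<bar>M\<bar> * \<bar>t\<bar>"
      using that by simp
    finally show ?thesis .
  qed
  hence "\<forall>\<^sub>F t in at 0. norm ((F t - F 0) / t - a) \<le> \<bar>M\<bar> * \<bar>t\<bar>"
    by (simp add: eventually_at_filter)
  moreover have "((\<lambda>t. \<bar>M\<bar> * \<bar>t\<bar>) \<longlongrightarrow> 0) (at (0::real))"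
    by (rule tendsto_eq_intros) (auto intro!: tendsto_eq_intros)
  ultimately have "((\<lambda>t. (F t - F 0) / t - a) \<longlongrightarrow> 0) (at 0)"
    by (rule Lim_null_comparison)
  hence "((\<lambda>t. (F t - F 0) / (t - 0)) \<longlongrightarrow> a) (at 0)"
    by (simp add: LIM_zero_iff)
  thus ?thesis by (simp add: has_field_derivative_iff)
qed

section \<open>Distance to the convex hull of finitely many points\<close>

definition lincomb :: "nat \<Rightarrow> (nat \<Rightarrow> nat \<Rightarrow> real) \<Rightarrow> (nat \<Rightarrow> real) \<Rightarrow> nat \<Rightarrow> real" where
  "lincomb m p l = (\<lambda>k. \<Sum>i<m. l i * p i k)"

definition std_simplex :: "nat \<Rightarrow> (nat \<Rightarrow> real) set" where
  "std_simplex m = {l. (\<forall>i<m. 0 \<le> l i) \<and> (\<forall>i\<ge>m. l i = 0) \<and> (\<Sum>i<m. l i) = 1}"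

lemma compact_std_simplex: "compact (std_simplex m)"
proof -
  define S where "S = (\<lambda>i::nat. if i < m then {0..1::real} else {0})"
  have "compact (PiE UNIV S)"
    unfolding compactin_euclidean_iff[symmetric] euclidean_product_topology[symmetric]
    by (subst compactin_PiE) (auto simp: S_def)
  moreover have "std_simplex m =
      (\<Inter>i<m. {l. 0 \<le> l i}) \<inter> (\<Inter>i\<in>{m..}. {l. l i = 0}) \<inter> {l. (\<Sum>i<m. l i) = 1}"
    by (auto simp: std_simplex_def)
  hence "closed (std_simplex m)"
    by (simp only:) (intro closed_Int closed_INT ballI closed_Collect_le closed_Collect_eq
        continuous_on_sum continuous_on_product_coordinates continuous_on_const)
  moreover have "std_simplex m \<subseteq> PiE UNIV S"
  proof
    fix l assume l: "l \<in> std_simplex m"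
    have "l i \<le> 1" if "i < m" for i
      using l that member_le_sum[of i "{..<m}" l] by (auto simp: std_simplex_def)
    thus "l \<in> PiE UNIV S" using l by (auto simp: std_simplex_def S_def)
  qed
  ultimately show ?thesis
    by (metis compact_Int_closed inf.absorb_iff2)
qed

lemma std_simplex_vertex: "j < m \<Longrightarrow> (\<lambda>i. if i = j then 1 else 0) \<in> std_simplex m"
  by (auto simp: std_simplex_def)

lemma lincomb_vertex:
  assumes "j < m" shows "lincomb m p (\<lambda>i. if i = j then 1 else 0) = p j"
proof -
  have "lincomb m p (\<lambda>i. if i = j then 1 else 0) = (\<lambda>k. \<Sum>i<m. if i = j then p j k else 0)"
    unfolding lincomb_def by (intro ext sum.cong) auto
  thus ?thesis using assms by simp
qed

lemma std_simplex_segment: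
  assumes "l \<in> std_simplex m" "l' \<in> std_simplex m" "0 \<le> t" "t \<le> 1"
  shows "(\<lambda>i. (1 - t) * l i + t * l' i) \<in> std_simplex m"
  using assms by (auto simp: std_simplex_def sum.distrib sum_distrib_left[symmetric])

lemma lincomb_segment:
  "lincomb m p (\<lambda>i. (1 - t) * l i + t * l' i)
     = (\<lambda>k. lincomb m p l k + t * (lincomb m p l' k - lincomb m p l k))"
  by (auto simp: lincomb_def algebra_simps sum.distrib sum_distrib_left sum_subtractf)

text \<open>The convex hull of \<open>p 0, \<dots>, p (m - 1)\<close> is parametrised by the standard simplex.
  Only the first \<open>d\<close> coordinates enter the distance, so a nearest point need not be unique and
  is chosen by \<open>SOME\<close>.\<close>
definition hull_coeffs :: "nat \<Rightarrow> nat \<Rightarrow> (nat \<Rightarrow> nat \<Rightarrow> real) \<Rightarrow> (nat \<Rightarrow> real) \<Rightarrow> nat \<Rightarrow> real" where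
  "hull_coeffs d m p y = (SOME l. l \<in> std_simplex m \<and>
     (\<forall>l'\<in>std_simplex m. sqdist d y (lincomb m p l) \<le> sqdist d y (lincomb m p l')))"

definition hull_proj :: "nat \<Rightarrow> nat \<Rightarrow> (nat \<Rightarrow> nat \<Rightarrow> real) \<Rightarrow> (nat \<Rightarrow> real) \<Rightarrow> nat \<Rightarrow> real" where
  "hull_proj d m p y = lincomb m p (hull_coeffs d m p y)"

definition hull_sqdist :: "nat \<Rightarrow> nat \<Rightarrow> (nat \<Rightarrow> nat \<Rightarrow> real) \<Rightarrow> (nat \<Rightarrow> real) \<Rightarrow> real" where
  "hull_sqdist d m p y = sqdist d y (hull_proj d m p y)"

lemma hull_coeffs_minimal:
  assumes "0 < m"
  shows "hull_coeffs d m p y \<in> std_simplex m"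
    and "l \<in> std_simplex m \<Longrightarrow> hull_sqdist d m p y \<le> sqdist d y (lincomb m p l)"
proof -
  have "continuous_on (std_simplex m) (\<lambda>l. sqdist d y (lincomb m p l))"
    unfolding sqdist_def lincomb_def
    by (intro continuous_intros continuous_on_product_coordinates[THEN continuous_on_subset]) auto
  hence "\<exists>l. l \<in> std_simplex m \<and>
      (\<forall>l'\<in>std_simplex m. sqdist d y (lincomb m p l) \<le> sqdist d y (lincomb m p l'))"
    using continuous_attains_inf[OF compact_std_simplex] std_simplex_vertex[OF assms] by blast
  from someI_ex[OF this] have "hull_coeffs d m p y \<in> std_simplex m \<and> (\<forall>l'\<in>std_simplex m.
      sqdist d y (hull_proj d m p y) \<le> sqdist d y (lincomb m p l'))"
    unfolding hull_proj_def hull_coeffs_def .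
  thus "hull_coeffs d m p y \<in> std_simplex m"
    and "l \<in> std_simplex m \<Longrightarrow> hull_sqdist d m p y \<le> sqdist d y (lincomb m p l)"
    by (auto simp: hull_sqdist_def)
qed

lemma hull_sqdist_nonneg: "0 \<le> hull_sqdist d m p y"
  unfolding hull_sqdist_def by (rule sqdist_nonneg)

lemma hull_sqdist_le_vertex: "j < m \<Longrightarrow> hull_sqdist d m p y \<le> sqdist d y (p j)"
  using hull_coeffs_minimal(2)[OF _ std_simplex_vertex] lincomb_vertex by fastforce

lemma hull_sqdist_vertex: "j < m \<Longrightarrow> hull_sqdist d m p (p j) = 0"
  using hull_sqdist_le_vertex[of j m d p "p j"] hull_sqdist_nonneg[of d m p "p j"]
  by (simp add: sqdist_def)

lemma hull_proj_obtuse_angle: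
  assumes "0 < m" "l \<in> std_simplex m"
  shows "(\<Sum>k<d. (y k - hull_proj d m p y k) * (lincomb m p l k - hull_proj d m p y k)) \<le> 0"
proof (rule ccontr)
  define z where "z = hull_proj d m p y"
  define w where "w = lincomb m p l"
  define V where "V = (\<Sum>k<d. (y k - z k) * (w k - z k))"
  define W where "W = sqdist d w z"
  assume "\<not> ?thesis"
  hence V: "V > 0" by (simp add: V_def z_def w_def)
  have W: "W \<ge> 0" unfolding W_def by (rule sqdist_nonneg)
  have key: "2 * V \<le> t * W" if t: "0 < t" "t \<le> 1" for t
  proof -
    have "sqdist d y z \<le> sqdist d y (lincomb m p (\<lambda>i. (1 - t) * hull_coeffs d m p y i + t * l i))"
      unfolding z_def hull_sqdist_def[symmetric] using assms t
      by (intro hull_coeffs_minimal(2) std_simplex_segment hull_coeffs_minimal(1)) auto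
    also have "\<dots> = sqdist d y z - 2 * t * V + t\<^sup>2 * W"
      unfolding lincomb_segment hull_proj_def[symmetric] z_def[symmetric] w_def[symmetric]
      by (simp add: V_def W_def sqdist_def power2_eq_square algebra_simps sum.distrib
          sum_distrib_left sum_subtractf)
    finally have "0 \<le> t * (t * W - 2 * V)"
      by (simp add: power2_eq_square algebra_simps)
    thus ?thesis using t by (simp add: zero_le_mult_iff)
  qed
  show False
  proof (cases "W = 0")
    case True
    thus False using key[of 1] V by simp
  next
    case False
    hence "2 * V \<le> min 1 (V / W) * W" using V W by (intro key) auto
    also have "\<dots> \<le> V" using False W by (simp add: min_def field_simps)
    finally show False using V by simp
  qed
qed

text \<open>\<open>y - hull_proj y\<close> is half the gradient of \<open>hull_sqdist\<close>; its Lipschitz bound follows by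
  adding the obtuse-angle inequalities at \<open>y\<close> and \<open>y'\<close>.\<close>
lemma hull_residual_nonexpansive:
  assumes "0 < m"
  shows "(\<Sum>k<d. ((y' k - hull_proj d m p y' k) - (y k - hull_proj d m p y k))\<^sup>2) \<le> sqdist d y' y"
proof -
  define a where "a = hull_proj d m p y"
  define b where "b = hull_proj d m p y'"
  have "(\<Sum>k<d. (y k - a k) * (b k - a k)) \<le> 0" "(\<Sum>k<d. (y' k - b k) * (a k - b k)) \<le> 0"
    unfolding a_def b_def hull_proj_def
    by (intro hull_proj_obtuse_angle[unfolded hull_proj_def] hull_coeffs_minimal(1) assms)+
  moreover have "(\<Sum>k<d. (y k - a k) * (b k - a k)) + (\<Sum>k<d. (y' k - b k) * (a k - b k))
      = (\<Sum>k<d. (b k - a k)\<^sup>2) - (\<Sum>k<d. (y' k - y k) * (b k - a k))"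
    by (simp add: sum.distrib[symmetric] sum_subtractf[symmetric] power2_eq_square algebra_simps)
  moreover have "(\<Sum>k<d. ((y' k - b k) - (y k - a k))\<^sup>2)
      = sqdist d y' y - 2 * (\<Sum>k<d. (y' k - y k) * (b k - a k)) + (\<Sum>k<d. (b k - a k)\<^sup>2)"
    by (simp add: sqdist_def power2_eq_square algebra_simps sum.distrib sum_subtractf
        sum_distrib_left)
  moreover have "0 \<le> (\<Sum>k<d. (b k - a k)\<^sup>2)" by (intro sum_nonneg) auto
  ultimately show ?thesis by (simp add: a_def b_def)
qed

text \<open>Compare \<open>y'\<close> with \<open>hull_proj y\<close> for the upper bound and \<open>y\<close> with \<open>hull_proj y'\<close> for the
  lower one; the difference of the two linear terms is controlled by \<open>hull_residual_nonexpansive\<close>.\<close>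
lemma hull_sqdist_quadratic_remainder:
  assumes "0 < m"
  shows "\<bar>hull_sqdist d m p y' - hull_sqdist d m p y
           - 2 * (\<Sum>k<d. (y' k - y k) * (y k - hull_proj d m p y k))\<bar> \<le> 3 * sqdist d y' y"
proof -
  define a where "a = hull_proj d m p y"
  define b where "b = hull_proj d m p y'"
  define D where "D = sqdist d y' y"
  define G where "G = (\<Sum>k<d. (y' k - y k) * (y k - a k))"
  define E where "E = (\<Sum>k<d. (y' k - y k) * ((y' k - b k) - (y k - a k)))"
  have "hull_sqdist d m p y' \<le> sqdist d y' a"
    unfolding a_def hull_proj_def by (intro hull_coeffs_minimal assms)
  also have "\<dots> = D + 2 * G + hull_sqdist d m p y"
    using sum_square_add[of "\<lambda>k. y' k - y k" "\<lambda>k. y k - a k" "{..<d}"]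
    by (simp add: D_def G_def a_def hull_sqdist_def sqdist_def)
  finally have upper: "hull_sqdist d m p y' \<le> D + 2 * G + hull_sqdist d m p y" .
  have "hull_sqdist d m p y \<le> sqdist d y b"
    unfolding b_def hull_proj_def by (intro hull_coeffs_minimal assms)
  also have "\<dots> = D - 2 * (G + E) + hull_sqdist d m p y'"
  proof -
    have "(\<Sum>k<d. (y' k - b k) * (y k - y' k)) = - (G + E)"
      by (simp add: G_def E_def sum.distrib[symmetric] sum_negf[symmetric] algebra_simps)
    moreover have "(\<Sum>k<d. (y k - y' k)\<^sup>2) = D"
      by (simp add: D_def sqdist_def power2_commute)
    ultimately show ?thesis
      using sum_square_add[of "\<lambda>k. y' k - b k" "\<lambda>k. y k - y' k" "{..<d}"]
      by (simp add: b_def hull_sqdist_def sqdist_def)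
  qed
  finally have lower: "hull_sqdist d m p y \<le> D - 2 * (G + E) + hull_sqdist d m p y'" .
  have "\<bar>E\<bar> \<le> sqrt D * sqrt (\<Sum>k<d. ((y' k - b k) - (y k - a k))\<^sup>2)"
    unfolding E_def D_def sqdist_def by (rule abs_sum_mult_le_sqrt)
  also have "\<dots> \<le> sqrt D * sqrt D"
    using hull_residual_nonexpansive[OF assms, where d=d and y'=y' and p=p and y=y]
      sqdist_nonneg[of d y' y]
    by (intro mult_left_mono) (auto simp: D_def a_def b_def)
  finally have "\<bar>E\<bar> \<le> D" using sqdist_nonneg[of d y' y] by (simp add: D_def)
  thus ?thesis using upper lower by (simp add: a_def D_def G_def abs_le_iff)
qed

lemma sqrt_hull_sqdist_Lipschitz:
  assumes "0 < m"
  shows "\<bar>sqrt (hull_sqdist d m p x) - sqrt (hull_sqdist d m p y)\<bar> \<le> sqrt (sqdist d x y)"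
proof -
  have "sqrt (hull_sqdist d m p y') \<le> sqrt (sqdist d y' y) + sqrt (hull_sqdist d m p y)" for y y'
  proof -
    define a where "a = hull_proj d m p y"
    have "hull_sqdist d m p y' \<le> sqdist d y' a"
      unfolding a_def hull_proj_def by (intro hull_coeffs_minimal assms)
    hence "sqrt (hull_sqdist d m p y') \<le> L2_set (\<lambda>k. (y' k - y k) + (y k - a k)) {..<d}"
      by (simp add: sqdist_def L2_set_def)
    also have "\<dots> \<le> L2_set (\<lambda>k. y' k - y k) {..<d} + L2_set (\<lambda>k. y k - a k) {..<d}"
      by (rule L2_set_triangle_ineq)
    finally show ?thesis by (simp add: L2_set_def sqdist_def hull_sqdist_def a_def)
  qed
  from this[of y x] this[of x y] show ?thesis
    by (simp add: sqdist_commute[of d y x] abs_le_iff)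
qed

lemma continuous_on_hull_sqdist:
  assumes "0 < m" shows "continuous_on S (hull_sqdist d m p)"
proof -
  have "continuous_on S (\<lambda>y. (sqrt (hull_sqdist d m p y))\<^sup>2)"
    by (intro continuous_on_power continuous_on_if_sqdist_Lipschitz[where M=1 and d=d])
       (use sqrt_hull_sqdist_Lipschitz[OF assms] in simp)
  thus ?thesis by (simp add: hull_sqdist_nonneg)
qed

text \<open>By Cauchy-Schwarz, \<open>|y|\<^sup>2 - T \<le> \<langle>y, y - hull_proj y\<rangle> \<le> |y| \<cdot> dist(y, hull)\<close>.\<close>
lemma hull_sqdist_ge_quarter:
  assumes "0 < m" and T: "\<forall>j<m. (\<Sum>k<d. y k * p j k) \<le> T" and T2: "2 * T \<le> (\<Sum>k<d. (y k)\<^sup>2)"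
  shows "(\<Sum>k<d. (y k)\<^sup>2) / 4 \<le> hull_sqdist d m p y"
proof -
  define Y where "Y = (\<Sum>k<d. (y k)\<^sup>2)"
  have Y0: "0 \<le> Y" unfolding Y_def by (simp add: sum_nonneg)
  define l where "l = hull_coeffs d m p y"
  define z where "z = hull_proj d m p y"
  have l: "l \<in> std_simplex m" unfolding l_def by (rule hull_coeffs_minimal(1)[OF assms(1)])
  have "(\<Sum>k<d. y k * z k) = (\<Sum>i<m. l i * (\<Sum>k<d. y k * p i k))"
    by (simp add: z_def hull_proj_def l_def[symmetric] lincomb_def sum_distrib_left algebra_simps
        sum.swap[of _ "{..<d}"])
  also have "\<dots> \<le> (\<Sum>i<m. l i * T)"
    using l T by (intro sum_mono mult_left_mono) (auto simp: std_simplex_def)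
  also have "\<dots> = T" using l by (simp add: sum_distrib_right[symmetric] std_simplex_def)
  finally have "Y - T \<le> (\<Sum>k<d. y k * (y k - z k))"
    by (simp add: Y_def power2_eq_square algebra_simps sum_subtractf)
  also have "\<dots> \<le> sqrt Y * sqrt (hull_sqdist d m p y)"
    using abs_sum_mult_le_sqrt[of y "\<lambda>k. y k - z k" "{..<d}"]
    by (simp add: Y_def hull_sqdist_def sqdist_def z_def)
  finally have "Y - T \<le> sqrt Y * sqrt (hull_sqdist d m p y)" .
  moreover have "sqrt Y * sqrt Y = Y" using Y0 by simp
  ultimately have "sqrt Y * sqrt Y \<le> sqrt Y * (2 * sqrt (hull_sqdist d m p y))"
    using T2 unfolding Y_def[symmetric] by linarith
  hence "sqrt Y \<le> 2 * sqrt (hull_sqdist d m p y)"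
  proof (cases "Y = 0")
    case False
    hence "0 < sqrt Y" using Y0 by simp
    thus ?thesis using mult_le_cancel_left_pos \<open>sqrt Y * sqrt Y \<le> _\<close> by blast
  qed (simp add: hull_sqdist_nonneg)
  hence "(sqrt Y)\<^sup>2 \<le> (2 * sqrt (hull_sqdist d m p y))\<^sup>2"
    using Y0 by (intro power_mono) auto
  thus ?thesis using Y0 by (simp add: Y_def power_mult_distrib hull_sqdist_nonneg)
qed

section \<open>Fooling functions\<close>

lemma hull_sqdist_is_C1:
  assumes "0 < m"
  shows "is_C1 d K (\<lambda>y. c * hull_sqdist d m p y) (\<lambda>y i. 2 * c * (y i - hull_proj d m p y i))"
  unfolding is_C1_def
proof (intro conjI allI impI ballI)
  show "continuous_on K (\<lambda>y. c * hull_sqdist d m p y)"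
    by (intro continuous_intros continuous_on_hull_sqdist assms)
next
  fix i assume "i < d"
  have "\<bar>2 * c * (y' i - hull_proj d m p y' i) - 2 * c * (y i - hull_proj d m p y i)\<bar>
          \<le> 2 * \<bar>c\<bar> * sqrt (sqdist d y' y)" for y y'
  proof -
    have "((y' i - hull_proj d m p y' i) - (y i - hull_proj d m p y i))\<^sup>2
        \<le> (\<Sum>k<d. ((y' k - hull_proj d m p y' k) - (y k - hull_proj d m p y k))\<^sup>2)"
      using \<open>i < d\<close> by (intro member_le_sum) auto
    also have "\<dots> \<le> sqdist d y' y" by (rule hull_residual_nonexpansive[OF assms])
    finally have "\<bar>(y' i - hull_proj d m p y' i) - (y i - hull_proj d m p y i)\<bar>
        \<le> sqrt (sqdist d y' y)"
      by (simp add: real_le_rsqrt)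
    thus ?thesis
      by (simp add: abs_mult right_diff_distrib[symmetric] mult_left_mono)
  qed
  thus "continuous_on K (\<lambda>y. 2 * c * (y i - hull_proj d m p y i))"
    by (rule continuous_on_if_sqdist_Lipschitz)
next
  fix x i assume "i < d"
  show "((\<lambda>t. c * hull_sqdist d m p (x(i := x i + t)))
          has_real_derivative 2 * c * (x i - hull_proj d m p x i)) (at 0)"
  proof (rule has_real_derivative_if_quadratic_remainder[where M="3 * \<bar>c\<bar>"])
    fix t
    have "\<bar>hull_sqdist d m p (x(i := x i + t)) - hull_sqdist d m p x
             - 2 * (t * (x i - hull_proj d m p x i))\<bar> \<le> 3 * t\<^sup>2"
      using hull_sqdist_quadratic_remainder[OF assms, of d p "x(i := x i + t)" x]
      by (simp only: sum_update_diff_mult[OF \<open>i < d\<close>] sqdist_update[OF \<open>i < d\<close>]) simp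
    hence "\<bar>c\<bar> * \<bar>hull_sqdist d m p (x(i := x i + t)) - hull_sqdist d m p x
             - 2 * (t * (x i - hull_proj d m p x i))\<bar> \<le> \<bar>c\<bar> * (3 * t\<^sup>2)"
      by (intro mult_left_mono) auto
    thus "\<bar>c * hull_sqdist d m p (x(i := x i + t)) - c * hull_sqdist d m p (x(i := x i + 0))
            - 2 * c * (x i - hull_proj d m p x i) * t\<bar> \<le> 3 * \<bar>c\<bar> * t\<^sup>2"
      by (simp add: abs_mult[symmetric] algebra_simps)
  qed
qed

lemma hull_sqdist_Lipschitz:
  assumes "0 < m" "0 \<le> R" "hull_sqdist d m p x \<le> R\<^sup>2" "hull_sqdist d m p y \<le> R\<^sup>2"
  shows "\<bar>hull_sqdist d m p x - hull_sqdist d m p y\<bar> \<le> 2 * R * dst d x y"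
proof -
  define u where "u = sqrt (hull_sqdist d m p x)"
  define v where "v = sqrt (hull_sqdist d m p y)"
  have uv: "0 \<le> u" "u \<le> R" "0 \<le> v" "v \<le> R"
    using assms real_sqrt_le_mono[of _ "R\<^sup>2"] hull_sqdist_nonneg[of d m p]
    by (auto simp: u_def v_def)
  have "hull_sqdist d m p x - hull_sqdist d m p y = (u - v) * (u + v)"
    by (simp add: u_def v_def hull_sqdist_nonneg algebra_simps)
  hence "\<bar>hull_sqdist d m p x - hull_sqdist d m p y\<bar> = \<bar>u - v\<bar> * (u + v)"
    using uv by (simp add: abs_mult)
  also have "\<dots> \<le> 2 * R * sqrt (sqdist d x y)"
    using sqrt_hull_sqdist_Lipschitz[OF assms(1), of d p x y] uv sqdist_nonneg[of d x y]
    by (subst mult.commute, intro mult_mono) (auto simp: u_def v_def)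
  finally show ?thesis by (simp add: dst_eq_sqrt_sqdist)
qed

lemma dir_deriv_hull_gradient_Lipschitz:
  fixes c :: real and p :: "nat \<Rightarrow> nat \<Rightarrow> real"
  assumes "0 < m" "\<theta> \<in> sphere_d d"
  defines "g \<equiv> \<lambda>y i. 2 * c * (y i - hull_proj d m p y i)"
  shows "\<bar>dir_deriv d g \<theta> x - dir_deriv d g \<theta> y\<bar> \<le> 2 * \<bar>c\<bar> * dst d x y"
proof -
  define r where "r = (\<lambda>k. (x k - hull_proj d m p x k) - (y k - hull_proj d m p y k))"
  have "dir_deriv d g \<theta> x - dir_deriv d g \<theta> y = 2 * c * (\<Sum>k<d. \<theta> k * r k)"
    by (simp add: dir_deriv_def g_def r_def sum_distrib_left sum_subtractf[symmetric] algebra_simps)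
  hence "\<bar>dir_deriv d g \<theta> x - dir_deriv d g \<theta> y\<bar> = 2 * \<bar>c\<bar> * \<bar>\<Sum>k<d. \<theta> k * r k\<bar>"
    by (simp add: abs_mult)
  also have "\<dots> \<le> 2 * \<bar>c\<bar> * (sqrt (\<Sum>k<d. (\<theta> k)\<^sup>2) * sqrt (\<Sum>k<d. (r k)\<^sup>2))"
    by (intro mult_left_mono abs_sum_mult_le_sqrt) auto
  also have "\<dots> \<le> 2 * \<bar>c\<bar> * sqrt (sqdist d x y)"
    using assms(2) hull_residual_nonexpansive[OF assms(1), where d=d and y'=x and p=p and y=y]
    by (intro mult_left_mono) (auto simp: r_def sphere_d_def nrm_def ip_def power2_eq_square)
  finally show ?thesis by (simp add: dst_eq_sqrt_sqdist)
qed

lemma scaled_hull_sqdist_in_C1_class: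
  assumes "0 < m" "\<forall>k<d. p 0 k = 0" "0 \<le> c" "0 \<le> R" "\<forall>x\<in>K. (\<Sum>k<d. (x k)\<^sup>2) \<le> R\<^sup>2"
    and "c * R\<^sup>2 \<le> 1" "2 * c * R \<le> A" "2 * c \<le> B"
  shows "(\<lambda>y. c * hull_sqdist d m p y) \<in> C1_class d A B K"
proof -
  have le_R: "hull_sqdist d m p x \<le> R\<^sup>2" if "x \<in> K" for x
  proof -
    have "sqdist d x (p 0) = (\<Sum>k<d. (x k)\<^sup>2)"
      unfolding sqdist_def using assms(2) by (intro sum.cong) auto
    thus ?thesis using hull_sqdist_le_vertex[OF assms(1), of d p x] assms(5) that by auto
  qed
  have "\<bar>c * hull_sqdist d m p x\<bar> \<le> 1" if "x \<in> K" for x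
    using mult_left_mono[OF le_R[OF that] assms(3)] assms(3,6) hull_sqdist_nonneg[of d m p x]
    by simp
  moreover have "\<bar>c * hull_sqdist d m p x - c * hull_sqdist d m p y\<bar> \<le> A * dst d x y"
    if "x \<in> K" "y \<in> K" for x y
  proof -
    have "\<bar>c * hull_sqdist d m p x - c * hull_sqdist d m p y\<bar>
        = c * \<bar>hull_sqdist d m p x - hull_sqdist d m p y\<bar>"
      using assms(3) by (simp add: abs_mult flip: right_diff_distrib)
    also have "\<dots> \<le> c * (2 * R * dst d x y)"
      using assms(1,3,4) le_R that by (intro mult_left_mono hull_sqdist_Lipschitz) auto
    also have "\<dots> \<le> A * dst d x y"
      using mult_right_mono[OF assms(7), of "dst d x y"]
      by (simp add: dst_eq_sqrt_sqdist sqdist_nonneg)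
    finally show ?thesis .
  qed
  moreover have "\<bar>dir_deriv d (\<lambda>y i. 2 * c * (y i - hull_proj d m p y i)) \<theta> x
                   - dir_deriv d (\<lambda>y i. 2 * c * (y i - hull_proj d m p y i)) \<theta> y\<bar> \<le> B * dst d x y"
    if "\<theta> \<in> sphere_d d" for \<theta> x y
    using dir_deriv_hull_gradient_Lipschitz[OF assms(1) that, where c=c and p=p and x=x and y=y]
      mult_right_mono[OF assms(8), of "dst d x y"] assms(3)
    by (simp add: dst_eq_sqrt_sqdist sqdist_nonneg)
  ultimately show ?thesis
    unfolding C1_class_def using hull_sqdist_is_C1[OF assms(1)] by blast
qed

lemma C1_class_uminus:
  assumes "f \<in> C1_class d A B K" shows "(\<lambda>x. - f x) \<in> C1_class d A B K"
proof -
  obtain g where g: "is_C1 d K f g" "\<forall>x\<in>K. \<bar>f x\<bar> \<le> 1"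
    "\<forall>x\<in>K. \<forall>y\<in>K. \<bar>f x - f y\<bar> \<le> A * dst d x y"
    "\<forall>\<theta>\<in>sphere_d d. \<forall>x\<in>K. \<forall>y\<in>K. \<bar>dir_deriv d g \<theta> x - dir_deriv d g \<theta> y\<bar> \<le> B * dst d x y"
    using assms unfolding C1_class_def by blast
  have "is_C1 d K (\<lambda>x. - f x) (\<lambda>x i. - g x i)"
    using g(1) unfolding is_C1_def by (auto intro: continuous_intros DERIV_minus)
  moreover have "dir_deriv d (\<lambda>x i. - g x i) \<theta> x = - dir_deriv d g \<theta> x" for \<theta> x
    by (simp add: dir_deriv_def sum_negf)
  ultimately show ?thesis
    using g(2-4) unfolding C1_class_def by (auto simp: abs_minus_commute)
qed

section \<open>Volume estimates for isotropic bodies\<close>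

lemma space_leb: "space (leb d) = dvec d"
  by (simp add: leb_def space_PiM dvec_def)

lemma borel_measurable_leb_coordinate [measurable]: "(\<lambda>x. x i) \<in> borel_measurable (leb d)"
proof (cases "i < d")
  case True
  have "(\<lambda>x. x i) \<in> measurable (leb d) lborel"
    unfolding leb_def by (rule measurable_component_singleton) (use True in auto)
  thus ?thesis by simp
next
  case False
  hence "\<forall>x\<in>space (leb d). x i = undefined"
    by (auto simp: space_leb dvec_def PiE_def extensional_def)
  thus ?thesis by (subst measurable_cong[where g="\<lambda>x. undefined"]) auto
qed

lemma borel_measurable_leb_continuous:
  fixes F :: "(nat \<Rightarrow> real) \<Rightarrow> real"
  assumes "continuous_on UNIV F"
  shows "F \<in> borel_measurable (leb d)"
proof -
  have "(\<lambda>x. x) \<in> borel_measurable (leb d)"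
    by (rule measurable_coordinatewise_then_product) (rule borel_measurable_leb_coordinate)
  from measurable_compose[OF this borel_measurable_continuous_onI[OF assms]] show ?thesis
    by simp
qed

lemma integ_eq_integral_indicator: "integ d K f = (\<integral>x. indicator K x * f x \<partial>leb d)"
  by (simp add: integ_def set_lebesgue_integral_def)

lemma reverse_Markov_inequality:
  fixes g :: "'a \<Rightarrow> real"
  assumes K: "emeasure M K = 1" and g: "g \<in> borel_measurable M"
    and bounds: "\<forall>x\<in>K. 0 \<le> g x \<and> g x \<le> R" and "0 \<le> t"
  shows "(\<integral>x. indicator K x * g x \<partial>M) \<le> t + R * measure M (K \<inter> {x \<in> space M. t \<le> g x})"
proof -
  define G where "G = K \<inter> {x \<in> space M. t \<le> g x}"
  have Ks: "K \<in> sets M" using K emeasure_notin_sets by fastforce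
  have Gs: "G \<in> sets M" unfolding G_def using Ks g by measurable
  have "emeasure M G \<le> emeasure M K" unfolding G_def using Ks by (intro emeasure_mono) auto
  hence Gfin: "emeasure M G < \<infinity>" using K by (simp add: order_le_less_trans)
  have int_K: "integrable M (\<lambda>x. indicator K x * g x)"
    using integrableI_bounded_set_indicator[OF Ks g, of R] K bounds by (simp add: abs_le_iff)
  have int_t: "integrable M (\<lambda>x. indicator K x * t)"
    using Ks K by (intro integrable_mult_left integrable_real_indicator) auto
  have int_G: "integrable M (\<lambda>x. R * indicator G x)"
    using Gs Gfin by (intro integrable_mult_right integrable_real_indicator) auto
  have "(\<integral>x. indicator K x * g x \<partial>M) \<le> (\<integral>x. indicator K x * t + R * indicator G x \<partial>M)"
    using bounds sets.sets_into_space[OF Ks] \<open>0 \<le> t\<close>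
    by (intro integral_mono int_K Bochner_Integration.integrable_add int_t int_G)
       (auto simp: G_def indicator_def)
  also have "\<dots> = t * measure M K + R * measure M G"
    using int_t int_G Ks Gs by (simp add: mult.commute[of _ t])
  finally show ?thesis using K by (simp add: measure_def G_def)
qed

lemma psi2_tail_bound:
  fixes h :: "'a \<Rightarrow> real"
  assumes K: "emeasure M K = 1" and h: "h \<in> borel_measurable M" and "0 < s" "0 \<le> t"
    and psi: "(\<integral>\<^sup>+x. ennreal (exp (\<bar>h x / s\<bar> powr 2)) \<partial>uniform_measure M K) \<le> 2"
  shows "measure M (K \<inter> {x \<in> space M. t < h x}) \<le> 2 * exp (- (t / s)\<^sup>2)"
proof -
  define H where "H = {x \<in> space M. t < h x}"
  have Ks: "K \<in> sets M" using K emeasure_notin_sets by fastforce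
  have Hs: "H \<in> sets M" unfolding H_def using h by measurable
  have "ennreal (exp ((t / s)\<^sup>2)) * indicator H x \<le> ennreal (exp (\<bar>h x / s\<bar> powr 2))" for x
  proof (cases "x \<in> H")
    case True
    hence "0 \<le> t" "t < h x" using assms(4) by (auto simp: H_def)
    hence "(t / s)\<^sup>2 \<le> \<bar>h x / s\<bar> powr 2"
      using assms(3) by (simp add: powr_numeral power_mono divide_right_mono)
    thus ?thesis using True by simp
  qed simp
  hence "ennreal (exp ((t / s)\<^sup>2)) * emeasure (uniform_measure M K) H \<le> 2"
    using Hs by (subst nn_integral_cmult_indicator[symmetric])
       (auto intro: order_trans[OF nn_integral_mono psi])
  moreover have "emeasure (uniform_measure M K) H = ennreal (measure M (K \<inter> H))"
  proof -
    have "emeasure M (K \<inter> H) \<le> emeasure M K" using Ks by (intro emeasure_mono) auto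
    hence "K \<inter> H \<in> fmeasurable M"
      using K Ks Hs by (auto simp: fmeasurable_def intro: le_less_trans)
    thus ?thesis using K Ks Hs by (simp add: emeasure_eq_measure2 divide_ennreal_def)
  qed
  ultimately have "ennreal (exp ((t / s)\<^sup>2) * measure M (K \<inter> H)) \<le> ennreal 2"
    by (simp add: ennreal_mult'')
  hence "exp ((t / s)\<^sup>2) * measure M (K \<inter> H) \<le> 2"
    by (subst (asm) ennreal_le_iff) auto
  thus ?thesis by (simp add: H_def exp_minus field_simps)
qed

lemma psi_norm_lessE:
  assumes "psi_norm \<alpha> \<mu> f < ereal r"
  obtains s where "0 < s" "s < r" "(\<integral>\<^sup>+x. ennreal (exp (\<bar>f x / s\<bar> powr \<alpha>)) \<partial>\<mu>) \<le> 2"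
  using assms by (auto simp: psi_norm_def Inf_less_iff)

definition unit_vec :: "nat \<Rightarrow> nat \<Rightarrow> nat \<Rightarrow> real" where
  "unit_vec d k = restrict (\<lambda>j. if j = k then 1 else 0) {..<d}"

lemma ip_unit_vec:
  assumes "k < d" shows "ip d x (unit_vec d k) = x k"
proof -
  have "ip d x (unit_vec d k) = (\<Sum>j<d. if j = k then x k else 0)"
    unfolding ip_def unit_vec_def by (intro sum.cong) auto
  thus ?thesis using assms by simp
qed

lemma unit_vec_in_sphere: "k < d \<Longrightarrow> unit_vec d k \<in> sphere_d d"
  using ip_unit_vec[of k d "unit_vec d k"]
  by (simp add: sphere_d_def nrm_def dvec_def unit_vec_def)

lemma isotropic_iso_const:
  assumes "1 \<le> d" "isotropic d K"
  shows "0 < iso_const d K"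
    and "\<theta> \<in> sphere_d d \<Longrightarrow> integ d K (\<lambda>x. (ip d x \<theta>)\<^sup>2) = (iso_const d K)\<^sup>2"
proof -
  obtain L where L: "L > 0" "\<forall>\<theta>\<in>sphere_d d. integ d K (\<lambda>x. (ip d x \<theta>)\<^sup>2) = L\<^sup>2"
    using assms(2) by (auto simp: isotropic_def)
  have "unit_vec d 0 \<in> sphere_d d" using assms(1) unit_vec_in_sphere by simp
  hence "iso_const d K = L"
    unfolding iso_const_def using L by (intro the_equality) (auto simp: power2_eq_iff_nonneg)
  thus "0 < iso_const d K" "\<theta> \<in> sphere_d d \<Longrightarrow> integ d K (\<lambda>x. (ip d x \<theta>)\<^sup>2) = (iso_const d K)\<^sup>2"
    using L by auto
qed

lemma isotropic_sets:
  assumes "isotropic d K"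
  shows "K \<in> sets (leb d)" "emeasure (leb d) K = 1"
  using assms emeasure_notin_sets[of K "leb d"] by (auto simp: isotropic_def)

lemma isotropic_second_moment:
  assumes "1 \<le> d" "isotropic d K" "\<forall>x\<in>K. (\<Sum>k<d. (x k)\<^sup>2) \<le> R"
  shows "integ d K (\<lambda>x. \<Sum>k<d. (x k)\<^sup>2) = real d * (iso_const d K)\<^sup>2"
proof -
  have int: "integrable (leb d) (\<lambda>x. indicator K x * (x k)\<^sup>2)" if "k < d" for k
  proof -
    have "(x k)\<^sup>2 \<le> R" if "x \<in> K" for x
      using member_le_sum[of k "{..<d}" "\<lambda>j. (x j)\<^sup>2"] assms(3) that \<open>k < d\<close> by force
    hence "integrable (leb d) (\<lambda>x. indicator K x *\<^sub>R (x k)\<^sup>2)"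
      using isotropic_sets[OF assms(2)]
      by (intro integrableI_bounded_set_indicator[where B=R]) auto
    thus ?thesis by simp
  qed
  have "integ d K (\<lambda>x. \<Sum>k<d. (x k)\<^sup>2) = (\<integral>x. (\<Sum>k<d. indicator K x * (x k)\<^sup>2) \<partial>leb d)"
    by (simp add: integ_eq_integral_indicator sum_distrib_left)
  also have "\<dots> = (\<Sum>k<d. (\<integral>x. indicator K x * (x k)\<^sup>2 \<partial>leb d))"
    by (rule Bochner_Integration.integral_sum) (use int in auto)
  also have "\<dots> = (\<Sum>k<d. integ d K (\<lambda>x. (x k)\<^sup>2))"
    by (simp add: integ_eq_integral_indicator)
  also have "\<dots> = (\<Sum>k<d. integ d K (\<lambda>x. (ip d x (unit_vec d k))\<^sup>2))"
    by (intro sum.cong) (simp_all add: ip_unit_vec)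
  also have "\<dots> = real d * (iso_const d K)\<^sup>2"
    using isotropic_iso_const(2)[OF assms(1,2) unit_vec_in_sphere] by simp
  finally show ?thesis .
qed

lemma isotropic_large_norm_mass:
  assumes "1 \<le> d" "isotropic d K" "\<forall>x\<in>K. (\<Sum>k<d. (x k)\<^sup>2) \<le> 4 * real d * (iso_const d K)\<^sup>2"
  shows "3/16 \<le> measure (leb d)
           (K \<inter> {x \<in> space (leb d). real d * (iso_const d K)\<^sup>2 / 4 \<le> (\<Sum>k<d. (x k)\<^sup>2)})"
proof -
  define V where "V = real d * (iso_const d K)\<^sup>2"
  define \<mu> where "\<mu> = measure (leb d) (K \<inter> {x \<in> space (leb d). V / 4 \<le> (\<Sum>k<d. (x k)\<^sup>2)})"
  have "0 < V" using isotropic_iso_const(1)[OF assms(1,2)] assms(1) by (simp add: V_def)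
  have "V = integ d K (\<lambda>x. \<Sum>k<d. (x k)\<^sup>2)"
    using isotropic_second_moment[OF assms] by (simp add: V_def)
  also have "\<dots> \<le> V / 4 + 4 * V * \<mu>"
    unfolding integ_eq_integral_indicator \<mu>_def
    using isotropic_sets(2)[OF assms(2)] assms(3) \<open>0 < V\<close>
    by (intro reverse_Markov_inequality) (auto simp: V_def sum_nonneg)
  finally have "V * 3 \<le> V * (16 * \<mu>)" by simp
  hence "3 \<le> 16 * \<mu>" using \<open>0 < V\<close> by (simp only: mult_le_cancel_left_pos)
  thus ?thesis by (simp add: \<mu>_def V_def)
qed

lemma isotropic_ip_tail_bound:
  assumes "1 \<le> d" "isotropic d K" "0 < b" "\<theta> \<in> sphere_d d" "0 \<le> t"
    and psi: "psi_norm 2 (uniform_measure (leb d) K) (\<lambda>x. ip d x \<theta>)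
                \<le> ereal (b * sqrt (integ d K (\<lambda>x. (ip d x \<theta>)\<^sup>2)))"
  shows "measure (leb d) (K \<inter> {x \<in> space (leb d). t < ip d x \<theta>})
           \<le> 2 * exp (- (t / (2 * b * iso_const d K))\<^sup>2)"
proof -
  define L where "L = iso_const d K"
  have "0 < L" using isotropic_iso_const(1)[OF assms(1,2)] by (simp add: L_def)
  have "sqrt (integ d K (\<lambda>x. (ip d x \<theta>)\<^sup>2)) = L"
    using isotropic_iso_const(2)[OF assms(1,2,4)] \<open>0 < L\<close> by (simp add: L_def)
  hence "psi_norm 2 (uniform_measure (leb d) K) (\<lambda>x. ip d x \<theta>) < ereal (2 * b * L)"
    using psi \<open>0 < L\<close> assms(3) by (auto intro: order.strict_trans1)
  then obtain s where s: "0 < s" "s < 2 * b * L"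
    and s_int: "(\<integral>\<^sup>+x. ennreal (exp (\<bar>ip d x \<theta> / s\<bar> powr 2)) \<partial>uniform_measure (leb d) K) \<le> 2"
    by (rule psi_norm_lessE)
  have "(\<lambda>x. ip d x \<theta>) \<in> borel_measurable (leb d)"
    unfolding ip_def by measurable
  from psi2_tail_bound[OF isotropic_sets(2)[OF assms(2)] this s(1) assms(5) s_int]
  have "measure (leb d) (K \<inter> {x \<in> space (leb d). t < ip d x \<theta>}) \<le> 2 * exp (- (t / s)\<^sup>2)" .
  also have "\<dots> \<le> 2 * exp (- (t / (2 * b * L))\<^sup>2)"
  proof -
    have "t / (2 * b * L) \<le> t / s"
      using s assms(3,5) \<open>0 < L\<close> by (intro divide_left_mono) auto
    hence "(t / (2 * b * L))\<^sup>2 \<le> (t / s)\<^sup>2"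
      using assms(3,5) \<open>0 < L\<close> by (intro power_mono) auto
    thus ?thesis by simp
  qed
  finally show ?thesis by (simp add: L_def)
qed

lemma isotropic_halfspace_mass:
  assumes "1 \<le> d" "isotropic d K" "0 < b" "\<theta> \<in> sphere_d d"
    and "sqrt (real d) * iso_const d K / 16 \<le> t"
    and psi: "psi_norm 2 (uniform_measure (leb d) K) (\<lambda>x. ip d x \<theta>)
                \<le> ereal (b * sqrt (integ d K (\<lambda>x. (ip d x \<theta>)\<^sup>2)))"
  shows "measure (leb d) (K \<inter> {x \<in> space (leb d). t < ip d x \<theta>})
           \<le> 2 * exp (- (real d / (1024 * b\<^sup>2)))"
proof -
  define L where "L = iso_const d K"
  have "0 < L" using isotropic_iso_const(1)[OF assms(1,2)] by (simp add: L_def)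
  have "sqrt (real d) / (32 * b) = (sqrt (real d) * L / 16) / (2 * b * L)"
    using \<open>0 < L\<close> by simp
  also have "\<dots> \<le> t / (2 * b * L)"
    using assms(3,5) \<open>0 < L\<close> by (intro divide_right_mono) (auto simp: L_def)
  finally have "(sqrt (real d) / (32 * b))\<^sup>2 \<le> (t / (2 * b * L))\<^sup>2"
    using assms(3) by (intro power_mono) auto
  hence exp_le: "2 * exp (- (t / (2 * b * L))\<^sup>2) \<le> 2 * exp (- (real d / (1024 * b\<^sup>2)))"
    by (simp add: power_divide power_mult_distrib)
  have "0 \<le> sqrt (real d) * iso_const d K / 16"
    using \<open>0 < L\<close> by (simp add: L_def)
  hence "0 \<le> t" using assms(5) by linarith
  hence "measure (leb d) (K \<inter> {x \<in> space (leb d). t < ip d x \<theta>}) \<le> 2 * exp (- (t / (2 * b * L))\<^sup>2)"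
    using isotropic_ip_tail_bound[OF assms(1-4) _ psi] by (simp add: L_def)
  thus ?thesis using exp_le by linarith
qed

lemma isotropic_cap_mass:
  assumes "1 \<le> d" "isotropic d K" "0 < b" "(\<Sum>k<d. (q k)\<^sup>2) \<le> 4 * real d * (iso_const d K)\<^sup>2"
    and psi: "\<forall>\<theta>\<in>sphere_d d. psi_norm 2 (uniform_measure (leb d) K) (\<lambda>x. ip d x \<theta>)
                 \<le> ereal (b * sqrt (integ d K (\<lambda>x. (ip d x \<theta>)\<^sup>2)))"
  shows "measure (leb d)
           (K \<inter> {x \<in> space (leb d). real d * (iso_const d K)\<^sup>2 / 8 < (\<Sum>k<d. x k * q k)})
           \<le> 2 * exp (- (real d / (1024 * b\<^sup>2)))"
proof -
  define L where "L = iso_const d K"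
  define N where "N = sqrt (\<Sum>k<d. (q k)\<^sup>2)"
  define C where "C = {x \<in> space (leb d). real d * L\<^sup>2 / 8 < (\<Sum>k<d. x k * q k)}"
  have "0 < L" using isotropic_iso_const(1)[OF assms(1,2)] by (simp add: L_def)
  have "N \<le> sqrt (4 * real d * L\<^sup>2)"
    using assms(4) by (simp add: N_def L_def)
  also have "\<dots> = 2 * sqrt (real d) * L"
    using \<open>0 < L\<close> by (simp add: real_sqrt_mult)
  finally have N_le: "N \<le> 2 * sqrt (real d) * L" .
  show ?thesis
  proof (cases "N = 0")
    case True
    hence "\<forall>k<d. q k = 0" by (simp add: N_def sum_nonneg_eq_0_iff)
    thus ?thesis by (simp add: mult_less_0_iff)
  next
    case False
    hence "0 < N" by (simp add: N_def order_less_le sum_nonneg)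
    have "sqrt (real d) * L / 16 = real d * L\<^sup>2 / (8 * (2 * sqrt (real d) * L))"
      using \<open>0 < L\<close> assms(1) by (simp add: field_simps power2_eq_square flip: real_sqrt_mult)
    also have "\<dots> \<le> real d * L\<^sup>2 / (8 * N)"
      using N_le \<open>0 < N\<close> \<open>0 < L\<close> assms(1) by (intro divide_left_mono) (auto simp: mult_ac)
    finally have threshold: "sqrt (real d) * L / 16 \<le> real d * L\<^sup>2 / (8 * N)" .
    define \<theta> where "\<theta> = restrict (\<lambda>k. q k / N) {..<d}"
    have N2: "N\<^sup>2 = (\<Sum>k<d. (q k)\<^sup>2)" by (simp add: N_def sum_nonneg)
    have "ip d \<theta> \<theta> = (\<Sum>k<d. (q k)\<^sup>2) / N\<^sup>2"
      by (simp add: ip_def \<theta>_def sum_divide_distrib power2_eq_square)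
    hence "\<theta> \<in> sphere_d d"
      using \<open>0 < N\<close> by (simp add: sphere_d_def nrm_def dvec_def \<theta>_def flip: N2)
    moreover have ip_\<theta>: "ip d x \<theta> = (\<Sum>k<d. x k * q k) / N" for x
      by (simp add: ip_def \<theta>_def sum_divide_distrib)
    have "C = {x \<in> space (leb d). real d * L\<^sup>2 / (8 * N) < ip d x \<theta>}"
      using \<open>0 < N\<close> by (auto simp: C_def ip_\<theta> field_simps)
    ultimately show ?thesis
      using isotropic_halfspace_mass[OF assms(1-3)] psi threshold by (simp add: C_def L_def)
  qed
qed

lemma convex_body_sum_squares_le:
  assumes "convex_body d K" "x \<in> K" "rad d K \<le> r"
  shows "(\<Sum>k<d. (x k)\<^sup>2) \<le> r\<^sup>2"
proof -
  have "continuous_on UNIV (nrm d)"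
    unfolding nrm_def ip_def by (intro continuous_intros continuous_on_product_coordinates)
  moreover have "compact K" using assms(1) by (simp add: convex_body_def)
  ultimately have "bdd_above (nrm d ` K)"
    by (meson bounded_imp_bdd_above compact_continuous_image compact_imp_bounded
        continuous_on_subset subset_UNIV)
  hence "nrm d x \<le> r"
    using cSUP_upper[OF assms(2)] assms(3) unfolding rad_def by fastforce
  moreover have "0 \<le> nrm d x" by (simp add: nrm_def ip_def sum_nonneg)
  ultimately have "(nrm d x)\<^sup>2 \<le> r\<^sup>2" by (intro power_mono)
  thus ?thesis by (simp add: nrm_def ip_def sum_nonneg power2_eq_square)
qed

section \<open>Lower bound for the information complexity\<close>

lemma adapt_info_replicate_zero:
  "(\<forall>j<n. f (P j (replicate j 0)) = 0) \<Longrightarrow> adapt_info P f n = replicate n 0"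
  by (induction n) (simp_all add: Let_def replicate_append_same)

text \<open>If \<open>f\<close> vanishes at the points queried on zero data, then \<open>f\<close> and \<open>-f\<close> yield the same
  (zero) information, so the algorithm errs by at least \<open>integ d K f\<close> on one of them.\<close>
lemma info_complexity_ge_if_fooling:
  assumes "\<And>n (P :: nat \<Rightarrow> real list \<Rightarrow> nat \<Rightarrow> real). (\<forall>j ys. P j ys \<in> K) \<Longrightarrow> real n < N \<Longrightarrow>
             \<exists>f. f \<in> F \<and> (\<lambda>x. - f x) \<in> F \<and> (\<forall>j<n. f (P j (replicate j 0)) = 0)
               \<and> \<epsilon> < integ d K f"
  shows "ereal N \<le> info_complexity d K F \<epsilon>"
  unfolding info_complexity_def
proof (intro Inf_greatest, safe)
  fix n P and \<phi> :: "real list \<Rightarrow> real"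
  assume P: "\<forall>j ys. P j ys \<in> K"
    and err: "(SUP f\<in>F. ereal \<bar>integ d K f - \<phi> (adapt_info P f n)\<bar>) \<le> ereal \<epsilon>"
  show "ereal N \<le> ereal (real n)"
  proof (rule ccontr)
    assume "\<not> ?thesis"
    hence "real n < N" by simp
    then obtain f where f: "f \<in> F" "(\<lambda>x. - f x) \<in> F" "\<forall>j<n. f (P j (replicate j 0)) = 0"
      "\<epsilon> < integ d K f"
      using assms[OF P] by blast
    have zero_info: "\<bar>integ d K g - \<phi> (replicate n 0)\<bar> \<le> \<epsilon>"
      if "g \<in> F" "\<forall>j<n. g (P j (replicate j 0)) = 0" for g
      using order_trans[OF SUP_upper[OF that(1)] err]
        adapt_info_replicate_zero[where P=P and f=g, OF that(2)]
      by simp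
    have "integ d K (\<lambda>x. - f x) = - integ d K f"
      by (simp add: integ_eq_integral_indicator)
    hence "\<bar>- integ d K f - \<phi> (replicate n 0)\<bar> \<le> \<epsilon>"
      using zero_info[of "\<lambda>x. - f x"] f(2,3) by simp
    thus False using zero_info[OF f(1,3)] f(4) by linarith
  qed
qed

lemma integral_indicator_ge_measure_diff:
  fixes f :: "'a \<Rightarrow> real"
  assumes f: "integrable M (\<lambda>x. indicator K x * f x)" "\<forall>x\<in>K. 0 \<le> f x"
    and ge: "\<forall>x\<in>K \<inter> G. (\<forall>j\<in>J. x \<notin> H j) \<longrightarrow> \<alpha> \<le> f x" and "0 \<le> \<alpha>"
    and sets: "K \<in> sets M" "emeasure M K < \<infinity>" "G \<in> sets M" "\<And>j. j \<in> J \<Longrightarrow> H j \<in> sets M"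
    and "finite J"
  shows "\<alpha> * (measure M (K \<inter> G) - (\<Sum>j\<in>J. measure M (K \<inter> H j))) \<le> (\<integral>x. indicator K x * f x \<partial>M)"
proof -
  have fin: "emeasure M (K \<inter> S) < \<infinity>" if "S \<in> sets M" for S
    using emeasure_mono[of "K \<inter> S" K M] sets that by (auto intro: le_less_trans)
  have int: "integrable M (indicator (K \<inter> S) :: 'a \<Rightarrow> real)" if "S \<in> sets M" for S
    using fin[OF that] sets that by (intro integrable_real_indicator) auto
  have "\<alpha> * (indicator (K \<inter> G) x - (\<Sum>j\<in>J. indicator (K \<inter> H j) x)) \<le> indicator K x * f x" for x
  proof (cases "x \<in> K")
    case True
    show ?thesis
    proof (cases "\<exists>j\<in>J. x \<in> H j")
      case True
      then obtain j where "j \<in> J" "x \<in> H j" by blast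
      hence "1 \<le> (\<Sum>j\<in>J. indicator (K \<inter> H j) x :: real)"
        using \<open>x \<in> K\<close> member_le_sum[of j J "\<lambda>j. indicator (K \<inter> H j) x :: real"] \<open>finite J\<close>
        by simp
      hence "\<alpha> * (indicator (K \<inter> G) x - (\<Sum>j\<in>J. indicator (K \<inter> H j) x)) \<le> 0"
        using \<open>0 \<le> \<alpha>\<close> by (intro mult_nonneg_nonpos) (auto simp: indicator_def)
      moreover have "0 \<le> indicator K x * f x" using f(2) \<open>x \<in> K\<close> by simp
      ultimately show ?thesis by linarith
    next
      case False
      thus ?thesis using f(2) ge \<open>x \<in> K\<close> by (simp add: indicator_def)
    qed
  qed simp
  moreover have "integrable M (\<lambda>x. \<alpha> * (indicator (K \<inter> G) x - (\<Sum>j\<in>J. indicator (K \<inter> H j) x)))"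
    using int sets
    by (intro integrable_mult_right Bochner_Integration.integrable_diff
        Bochner_Integration.integrable_sum) auto
  ultimately have "(\<integral>x. \<alpha> * (indicator (K \<inter> G) x - (\<Sum>j\<in>J. indicator (K \<inter> H j) x)) \<partial>M)
           \<le> (\<integral>x. indicator K x * f x \<partial>M)"
    by (intro integral_mono f(1))
  also have "(\<integral>x. \<alpha> * (indicator (K \<inter> G) x - (\<Sum>j\<in>J. indicator (K \<inter> H j) x)) \<partial>M)
      = \<alpha> * (measure M (K \<inter> G) - (\<Sum>j\<in>J. measure M (K \<inter> H j)))"
    using int sets by (simp add: Bochner_Integration.integral_sum Bochner_Integration.integral_diff)
  finally show ?thesis .
qed

lemma hull_sqdist_ge_off_caps:
  assumes "V / 4 \<le> (\<Sum>k<d. (x k)\<^sup>2)" "0 \<le> V" "\<forall>j<n. (\<Sum>k<d. x k * q j k) \<le> V / 8"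
  shows "V / 16 \<le> hull_sqdist d (Suc n) (\<lambda>j. case j of 0 \<Rightarrow> (\<lambda>_. 0) | Suc j \<Rightarrow> q j) x"
proof -
  have "(\<Sum>k<d. x k * (case j of 0 \<Rightarrow> (\<lambda>_. 0) | Suc j \<Rightarrow> q j) k) \<le> V / 8" if "j < Suc n" for j
    using assms(2,3) that by (cases j) auto
  hence "(\<Sum>k<d. (x k)\<^sup>2) / 4 \<le> hull_sqdist d (Suc n) (\<lambda>j. case j of 0 \<Rightarrow> (\<lambda>_. 0) | Suc j \<Rightarrow> q j) x"
    using assms(1) by (intro hull_sqdist_ge_quarter[where T="V / 8"]) auto
  thus ?thesis using assms(1) by linarith
qed

lemma integrable_hull_sqdist:
  assumes "0 < m" "K \<in> sets (leb d)" "emeasure (leb d) K < \<infinity>" "\<forall>x\<in>K. sqdist d x (p 0) \<le> R"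
  shows "integrable (leb d) (\<lambda>x. indicator K x * hull_sqdist d m p x)"
proof -
  have "\<bar>hull_sqdist d m p x\<bar> \<le> R" if "x \<in> K" for x
    using hull_sqdist_le_vertex[OF assms(1), of d p x] hull_sqdist_nonneg[of d m p x] assms(4) that
    by auto
  hence "integrable (leb d) (\<lambda>x. indicator K x *\<^sub>R hull_sqdist d m p x)"
    using assms(1-3)
    by (intro integrableI_bounded_set_indicator[where B=R] borel_measurable_leb_continuous
        continuous_on_hull_sqdist) auto
  thus ?thesis by simp
qed

lemma integral_hull_sqdist_ge:
  assumes d: "1 \<le> d" and iso: "isotropic d K" and "0 < b"
    and psi: "\<forall>\<theta>\<in>sphere_d d. psi_norm 2 (uniform_measure (leb d) K) (\<lambda>x. ip d x \<theta>)
                 \<le> ereal (b * sqrt (integ d K (\<lambda>x. (ip d x \<theta>)\<^sup>2)))"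
    and bound: "\<forall>x\<in>K. (\<Sum>k<d. (x k)\<^sup>2) \<le> 4 * real d * (iso_const d K)\<^sup>2"
    and q: "\<forall>j<n. q j \<in> K"
  shows "real d * (iso_const d K)\<^sup>2 / 16 * (3/16 - 2 * real n * exp (- (real d / (1024 * b\<^sup>2))))
           \<le> integ d K (hull_sqdist d (Suc n) (\<lambda>j. case j of 0 \<Rightarrow> (\<lambda>_. 0) | Suc j \<Rightarrow> q j))"
proof -
  define V where "V = real d * (iso_const d K)\<^sup>2"
  define p where "p = (\<lambda>j. case j of 0 \<Rightarrow> (\<lambda>_. 0) | Suc j \<Rightarrow> q j)"
  define G where "G = {x \<in> space (leb d). V / 4 \<le> (\<Sum>k<d. (x k)\<^sup>2)}"
  define H where "H = (\<lambda>j. {x \<in> space (leb d). V / 8 < (\<Sum>k<d. x k * q j k)})"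
  have p_simps: "p 0 = (\<lambda>_. 0)" "p (Suc j) = q j" for j by (simp_all add: p_def)
  note Ks = isotropic_sets[OF iso]
  have "0 < V" using isotropic_iso_const(1)[OF d iso] d by (simp add: V_def)
  have "integrable (leb d) (\<lambda>x. indicator K x * hull_sqdist d (Suc n) p x)"
    using Ks bound by (intro integrable_hull_sqdist) (auto simp: p_simps sqdist_def)
  moreover have "V / 16 \<le> hull_sqdist d (Suc n) p x"
    if "x \<in> K \<inter> G" "\<forall>j\<in>{..<n}. x \<notin> H j" for x
    unfolding p_def using that \<open>0 < V\<close>
    by (intro hull_sqdist_ge_off_caps) (auto simp: H_def G_def not_less)
  moreover have "G \<in> sets (leb d)" "H j \<in> sets (leb d)" for j
    unfolding G_def H_def by measurable
  ultimately have integral_ge: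
    "V / 16 * (measure (leb d) (K \<inter> G) - (\<Sum>j<n. measure (leb d) (K \<inter> H j)))
       \<le> integ d K (hull_sqdist d (Suc n) p)"
    unfolding integ_eq_integral_indicator using Ks \<open>0 < V\<close>
    by (intro integral_indicator_ge_measure_diff) (auto simp: hull_sqdist_nonneg)
  have "3/16 \<le> measure (leb d) (K \<inter> G)"
    using isotropic_large_norm_mass[OF d iso bound] by (simp add: G_def V_def)
  moreover have "measure (leb d) (K \<inter> H j) \<le> 2 * exp (- (real d / (1024 * b\<^sup>2)))" if "j < n" for j
    using isotropic_cap_mass[OF d iso \<open>0 < b\<close> _ psi] bound q that by (simp add: H_def V_def)
  hence "(\<Sum>j<n. measure (leb d) (K \<inter> H j)) \<le> (\<Sum>j<n. 2 * exp (- (real d / (1024 * b\<^sup>2))))"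
    by (intro sum_mono) simp
  hence "(\<Sum>j<n. measure (leb d) (K \<inter> H j)) \<le> 2 * real n * exp (- (real d / (1024 * b\<^sup>2)))"
    by (simp add: mult_ac)
  ultimately have "3/16 - 2 * real n * exp (- (real d / (1024 * b\<^sup>2)))
      \<le> measure (leb d) (K \<inter> G) - (\<Sum>j<n. measure (leb d) (K \<inter> H j))"
    by linarith
  hence "V / 16 * (3/16 - 2 * real n * exp (- (real d / (1024 * b\<^sup>2))))
      \<le> integ d K (hull_sqdist d (Suc n) p)"
    using \<open>0 < V\<close> by (intro order_trans[OF _ integral_ge] mult_left_mono) auto
  thus ?thesis by (simp add: V_def p_def)
qed

lemma hull_sqdist_fooling_in_C1_class:
  assumes d: "1 \<le> d" and "0 < L" and bound: "\<forall>x\<in>K. (\<Sum>k<d. (x k)\<^sup>2) \<le> 4 * real d * L\<^sup>2"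
    and "0 < m" "\<forall>k<d. p 0 k = 0"
    and "0 < a" and a_lt: "a < min (A * sqrt (real d) * L) (B * real d * L\<^sup>2)"
  shows "(\<lambda>y. min (1/4) (a/4) / (real d * L\<^sup>2) * hull_sqdist d m p y) \<in> C1_class d A B K"
proof -
  define \<kappa> where "\<kappa> = min (1/4) (a/4)"
  define c where "c = \<kappa> / (real d * L\<^sup>2)"
  define R where "R = 2 * sqrt (real d) * L"
  have "0 < \<kappa>" "4 * \<kappa> \<le> a" using \<open>0 < a\<close> by (simp_all add: \<kappa>_def)
  have R2: "R\<^sup>2 = 4 * real d * L\<^sup>2" by (simp add: R_def power_mult_distrib)
  have "0 \<le> R" using \<open>0 < L\<close> by (simp add: R_def)
  have "c * hull_sqdist d m p y = \<kappa> / (real d * L\<^sup>2) * hull_sqdist d m p y" for y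
    by (simp add: c_def)
  moreover have "(\<lambda>y. c * hull_sqdist d m p y) \<in> C1_class d A B K"
  proof (rule scaled_hull_sqdist_in_C1_class)
    show "c * R\<^sup>2 \<le> 1" using d \<open>0 < L\<close> by (simp add: c_def R2 \<kappa>_def)
    have "2 * c * R = 4 * \<kappa> / (sqrt (real d) * L)"
      using d \<open>0 < L\<close> by (simp add: c_def R_def field_simps power2_eq_square flip: real_sqrt_mult)
    also have "\<dots> \<le> a / (sqrt (real d) * L)"
      using \<open>4 * \<kappa> \<le> a\<close> d \<open>0 < L\<close> by (intro divide_right_mono) auto
    also have "\<dots> \<le> A" using a_lt d \<open>0 < L\<close> by (simp add: field_simps)
    finally show "2 * c * R \<le> A" .
    have "2 * c = 2 * \<kappa> / (real d * L\<^sup>2)" by (simp add: c_def)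
    also have "\<dots> \<le> a / (real d * L\<^sup>2)"
      using \<open>4 * \<kappa> \<le> a\<close> \<open>0 < \<kappa>\<close> by (intro divide_right_mono) auto
    also have "\<dots> \<le> B" using a_lt d \<open>0 < L\<close> by (simp add: field_simps)
    finally show "2 * c \<le> B" .
  qed (use \<open>0 < \<kappa>\<close> \<open>0 \<le> R\<close> \<open>0 < m\<close> assms(5) bound in \<open>auto simp: c_def R2\<close>)
  ultimately show ?thesis by (simp add: \<kappa>_def)
qed

lemma info_complexity_exp_lower_bound:
  assumes d: "1 \<le> d" and body: "convex_body d K" and iso: "isotropic d K"
    and rad: "rad d K / (sqrt (real d) * iso_const d K) < 2"
    and "0 < b"
    and psi: "\<forall>\<theta>\<in>sphere_d d. psi_norm 2 (uniform_measure (leb d) K) (\<lambda>x. ip d x \<theta>)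
                 \<le> ereal (b * sqrt (integ d K (\<lambda>x. (ip d x \<theta>)\<^sup>2)))"
    and "0 < a"
    and a_lt: "a < min (A * sqrt (real d) * iso_const d K) (B * real d * (iso_const d K)\<^sup>2)"
    and eps: "\<epsilon> \<le> 3 * min (1/4) (a/4) / 512"
  shows "ereal (3/64 * exp (1 / (1024 * b\<^sup>2)) ^ d) \<le> info_complexity d K (C1_class d A B K) \<epsilon>"
proof (rule info_complexity_ge_if_fooling)
  fix n and P :: "nat \<Rightarrow> real list \<Rightarrow> nat \<Rightarrow> real"
  assume P: "\<forall>j ys. P j ys \<in> K" and n_small: "real n < 3/64 * exp (1 / (1024 * b\<^sup>2)) ^ d"
  define L where "L = iso_const d K"
  define \<kappa> where "\<kappa> = min (1/4) (a/4)"
  define p where "p = (\<lambda>j. case j of 0 \<Rightarrow> (\<lambda>_. 0) | Suc j \<Rightarrow> P j (replicate j 0))"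
  define f where "f = (\<lambda>y. \<kappa> / (real d * L\<^sup>2) * hull_sqdist d (Suc n) p y)"
  have "0 < L" using isotropic_iso_const(1)[OF d iso] by (simp add: L_def)
  have "0 < \<kappa>" using \<open>0 < a\<close> by (simp add: \<kappa>_def)
  have rad_le: "rad d K \<le> 2 * sqrt (real d) * L"
    using rad d \<open>0 < L\<close> by (simp add: L_def divide_less_eq mult.assoc)
  have bound: "\<forall>x\<in>K. (\<Sum>k<d. (x k)\<^sup>2) \<le> 4 * real d * L\<^sup>2"
    using convex_body_sum_squares_le[OF body _ rad_le] by (simp add: power_mult_distrib)
  have "f \<in> C1_class d A B K"
    unfolding f_def \<kappa>_def using a_lt \<open>0 < a\<close> \<open>0 < L\<close>
    by (intro hull_sqdist_fooling_in_C1_class[OF d _ bound]) (auto simp: p_def L_def)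
  moreover have "(\<lambda>x. - f x) \<in> C1_class d A B K"
    using C1_class_uminus[OF calculation] .
  moreover have "\<forall>j<n. f (P j (replicate j 0)) = 0"
    using hull_sqdist_vertex[of "Suc j" "Suc n" d p for j] by (simp add: f_def p_def)
  moreover have "\<epsilon> < integ d K f"
  proof -
    have "exp (1 / (1024 * b\<^sup>2)) ^ d = exp (real d / (1024 * b\<^sup>2))"
      by (simp flip: exp_of_nat_mult)
    hence "2 * real n * exp (- (real d / (1024 * b\<^sup>2))) < 3/32"
      using n_small by (simp add: exp_minus field_simps)
    hence "3 * \<kappa> / 512 < \<kappa> / 16 * (3/16 - 2 * real n * exp (- (real d / (1024 * b\<^sup>2))))"
      using \<open>0 < \<kappa>\<close> by (simp add: field_simps)
    also have "\<dots> = \<kappa> / (real d * L\<^sup>2)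
        * (real d * L\<^sup>2 / 16 * (3/16 - 2 * real n * exp (- (real d / (1024 * b\<^sup>2)))))"
      using d \<open>0 < L\<close> by simp
    also have "\<dots> \<le> \<kappa> / (real d * L\<^sup>2) * integ d K (hull_sqdist d (Suc n) p)"
      using integral_hull_sqdist_ge[OF d iso \<open>0 < b\<close> psi bound[unfolded L_def], of n]
        P \<open>0 < \<kappa>\<close> by (intro mult_left_mono) (simp_all add: p_def L_def)
    also have "\<dots> = integ d K f"
      by (simp add: f_def integ_eq_integral_indicator mult.left_commute)
    finally show ?thesis using eps by (simp add: \<kappa>_def)
  qed
  ultimately show "\<exists>f. f \<in> C1_class d A B K \<and> (\<lambda>x. - f x) \<in> C1_class d A B K
      \<and> (\<forall>j<n. f (P j (replicate j 0)) = 0) \<and> \<epsilon> < integ d K f"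
    by blast
qed

lemma frequently_less_of_less_limsup:
  fixes f :: "nat \<Rightarrow> real"
  assumes "ereal a < limsup (\<lambda>n. ereal (f n))"
  shows "\<exists>\<^sub>F n in sequentially. a < f n"
proof (rule ccontr)
  assume "\<not> ?thesis"
  hence "\<forall>\<^sub>F n in sequentially. ereal (f n) \<le> ereal a"
    by (simp add: not_frequently not_less)
  hence "limsup (\<lambda>n. ereal (f n)) \<le> ereal a" by (rule Limsup_bounded)
  with assms show False by simp
qed

lemma curse_if_frequently_exponential:
  assumes "0 < c" "0 < \<epsilon>0" "1 < \<beta>"
    and "\<exists>\<^sub>F d in sequentially. \<forall>\<epsilon>. \<epsilon> \<le> \<epsilon>0 \<longrightarrow> ereal (c * \<beta> ^ d) \<le> info_complexity d (Ks d) (F d) \<epsilon>"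
  shows "curse F Ks"
  using assms unfolding curse_def cofinite_eq_sequentially
  by (intro exI[of _ c] exI[of _ \<epsilon>0] exI[of _ "\<beta> - 1"] conjI) auto

theorem theorem1p1:
  fixes Ks :: "nat \<Rightarrow> (nat \<Rightarrow> real) set" and A B :: "nat \<Rightarrow> real"
  assumes bodies: "\<forall>d\<ge>1. convex_body d (Ks d) \<and> symmetric_body d (Ks d) \<and> isotropic d (Ks d)"
    and psi2: "uniform_psi_estimate 2 Ks"
    and rad: "limsup (\<lambda>d. ereal (rad d (Ks d) / (sqrt (real d) * iso_const d (Ks d)))) < 2"
    and Apos: "\<forall>d. A d > 0" and Bpos: "\<forall>d. B d > 0"
    and AB: "limsup (\<lambda>d. ereal (min (A d * sqrt (real d) * iso_const d (Ks d))
                                   (B d * real d * (iso_const d (Ks d))\<^sup>2))) > 0"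
  shows "curse (\<lambda>d. C1_class d (A d) (B d) (Ks d)) Ks"
proof -
  obtain b where "0 < b" and psi: "\<forall>d. \<forall>\<theta>\<in>sphere_d d.
      psi_norm 2 (uniform_measure (leb d) (Ks d)) (\<lambda>x. ip d x \<theta>)
        \<le> ereal (b * sqrt (integ d (Ks d) (\<lambda>x. (ip d x \<theta>)\<^sup>2)))"
    using psi2 by (auto simp: uniform_psi_estimate_def)
  obtain a where "0 < ereal a" and a_lt: "ereal a < limsup (\<lambda>d. ereal (min (A d * sqrt (real d) *
      iso_const d (Ks d)) (B d * real d * (iso_const d (Ks d))\<^sup>2)))"
    using ereal_dense2[OF AB] by blast
  have "0 < a" using \<open>0 < ereal a\<close> by simp
  have "\<exists>\<^sub>F d in sequentially. a < min (A d * sqrt (real d) * iso_const d (Ks d))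
                                   (B d * real d * (iso_const d (Ks d))\<^sup>2)"
    using a_lt by (rule frequently_less_of_less_limsup)
  moreover have "\<forall>\<^sub>F d in sequentially.
      1 \<le> d \<and> rad d (Ks d) / (sqrt (real d) * iso_const d (Ks d)) < 2"
    using eventually_conj[OF eventually_ge_at_top Limsup_lessD[OF rad]] by simp
  ultimately have "\<exists>\<^sub>F d in sequentially. \<forall>\<epsilon>. \<epsilon> \<le> 3 * min (1/4) (a/4) / 512 \<longrightarrow>
      ereal (3/64 * exp (1 / (1024 * b\<^sup>2)) ^ d)
        \<le> info_complexity d (Ks d) (C1_class d (A d) (B d) (Ks d)) \<epsilon>"
    by (rule frequently_eventually_frequently[THEN frequently_elim1])
       (use bodies psi \<open>0 < b\<close> \<open>0 < a\<close> in
         \<open>intro allI impI info_complexity_exp_lower_bound; auto\<close>)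
  thus ?thesis
    by (rule curse_if_frequently_exponential[rotated 3]) (use \<open>0 < a\<close> \<open>0 < b\<close> in auto)
qed

end
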